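(* Let $\mathfrak{v}=\mathfrak{v}_{\bar 0}\oplus\mathfrak{v}_{\bar 1}$ be a finite-dimensional complex superspace, $\chi\in\mathfrak{v}_{\bar 0}^*$, and $\hat A$ the completion of $S[\mathfrak{v}]$ at $M_\chi$, with an even continuous Poisson bracket $\{\cdot,\cdot\}$. (i) If there are odd $f,g\in\hat AM_\chi$ with $\{f,g\}=1+t$ for some $t\in M_\chi$, then there exists an odd $h\in\hat A$ with $\{h,h\}=1$. (ii) For an odd $h\in\hat A$ with $\{h,h\}=1$, let $\hat B_1=\ker(\mathrm{ad}_h)$. Then $\phi:\bigwedge(\mathbb{C}h)\otimes\hat B_1\to\hat A$, $a\otimes b\mapsto ab$, is an isomorphism of Poisson algebras.
   Context: $M_\chi$ is the ideal generated by $x-\chi(x)$, $x\in\mathfrak{v}$ ($\chi$ extended by zero on $\mathfrak{v}_{\bar 1}$), $\hat A=\varprojlim S[\mathfrak{v}]/M_\chi^k$; $\mathrm{ad}_h=\{h,\cdot\}$. $\bigwedge(\mathbb{C}h)=\mathbb{C}\oplus\mathbb{C}h$ carries the Poisson bracket with $\{h,h\}=1$. *)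

theory Defs
  imports Complex_Main
begin

text \<open>
  Choose a basis x_0..x_{m-1} of the even part and
  xi_0..xi_{n-1} of the odd part of the superspace v.  Put y_i = x_i - chi(x_i)
  (and xi_j - chi(xi_j) = xi_j since chi vanishes on the odd part).  Then
  M_chi is generated by the y_i and xi_j, and the M_chi-adic completion
  of S[v] is the algebra of formal power series in the commuting variables y_i
  with coefficients in the Grassmann algebra on the xi_j.
  An element is represented by its coefficient function:
  a alpha S = coefficient of y^alpha * xi_S, where alpha : nat => nat is an
  exponent vector supported in {..<m}, S a subset of {..<n}, and xi_S is the
  product of the xi_j, j in S, in increasing order.
\<close>

type_synonym ser = "(nat \<Rightarrow> nat) \<Rightarrow> nat set \<Rightarrow> complex"

definition valid_idx :: "nat \<Rightarrow> nat \<Rightarrow> (nat \<Rightarrow> nat) \<Rightarrow> nat set \<Rightarrow> bool" where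
  "valid_idx m n \<alpha> S \<longleftrightarrow> (\<forall>i\<ge>m. \<alpha> i = 0) \<and> S \<subseteq> {..<n}"

definition Ahat :: "nat \<Rightarrow> nat \<Rightarrow> ser set" where
  "Ahat m n = {a. \<forall>\<alpha> S. \<not> valid_idx m n \<alpha> S \<longrightarrow> a \<alpha> S = 0}"

definition szero :: ser where "szero = (\<lambda>\<alpha> S. 0)"
definition sone :: ser where "sone = (\<lambda>\<alpha> S. if (\<forall>i. \<alpha> i = 0) \<and> S = {} then 1 else 0)"
definition sadd :: "ser \<Rightarrow> ser \<Rightarrow> ser" where "sadd a b = (\<lambda>\<alpha> S. a \<alpha> S + b \<alpha> S)"
definition sneg :: "ser \<Rightarrow> ser" where "sneg a = (\<lambda>\<alpha> S. - a \<alpha> S)"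
definition sscal :: "complex \<Rightarrow> ser \<Rightarrow> ser" where "sscal c a = (\<lambda>\<alpha> S. c * a \<alpha> S)"

text \<open>Sign of the permutation sorting xi_T * xi_U (T, U disjoint) into xi_{T \<union> U}.\<close>
definition shuffle_sign :: "nat set \<Rightarrow> nat set \<Rightarrow> complex" where
  "shuffle_sign T U = (-1) ^ card {(i, j). i \<in> T \<and> j \<in> U \<and> j < i}"

text \<open>Multiplication of super power series (y's commute with everything, xi's anticommute).\<close>
definition smult :: "ser \<Rightarrow> ser \<Rightarrow> ser" where
  "smult a b = (\<lambda>\<alpha> S. \<Sum>\<beta>\<in>{\<beta>. \<forall>i. \<beta> i \<le> \<alpha> i}. \<Sum>T\<in>Pow S.
      shuffle_sign T (S - T) * a \<beta> T * b (\<lambda>i. \<alpha> i - \<beta> i) (S - T))"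

text \<open>Parity: \<open>homog m n p a\<close> means a is homogeneous of parity p (True = odd).\<close>
definition homog :: "nat \<Rightarrow> nat \<Rightarrow> bool \<Rightarrow> ser \<Rightarrow> bool" where
  "homog m n p a \<longleftrightarrow> a \<in> Ahat m n \<and> (\<forall>\<alpha> S. odd (card S) \<noteq> p \<longrightarrow> a \<alpha> S = 0)"

definition spar :: "ser \<Rightarrow> ser" where
  "spar a = (\<lambda>\<alpha> S. (-1) ^ card S * a \<alpha> S)"

definition ssign :: "bool \<Rightarrow> bool \<Rightarrow> complex" where
  "ssign p q = (if p \<and> q then -1 else 1)"

text \<open>(Closure in \<open>\<hat>A\<close> of) the k-th power of M_chi: series of order at least k,
  where y_i and xi_j have degree 1.  \<open>mhat m n 1\<close> is the ideal \<open>\<hat>A M_chi\<close>.\<close>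
definition mhat :: "nat \<Rightarrow> nat \<Rightarrow> nat \<Rightarrow> ser set" where
  "mhat m n k = {a \<in> Ahat m n. \<forall>\<alpha> S. (\<Sum>i<m. \<alpha> i) + card S < k \<longrightarrow> a \<alpha> S = 0}"

definition poisson_bracket :: "nat \<Rightarrow> nat \<Rightarrow> (ser \<Rightarrow> ser \<Rightarrow> ser) \<Rightarrow> bool" where
  "poisson_bracket m n br \<longleftrightarrow>
     (\<forall>a\<in>Ahat m n. \<forall>b\<in>Ahat m n. br a b \<in> Ahat m n) \<and>
     (\<forall>a\<in>Ahat m n. \<forall>b\<in>Ahat m n. \<forall>c\<in>Ahat m n.
        br (sadd a b) c = sadd (br a c) (br b c) \<and> br c (sadd a b) = sadd (br c a) (br c b)) \<and>
     (\<forall>z. \<forall>a\<in>Ahat m n. \<forall>b\<in>Ahat m n.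
        br (sscal z a) b = sscal z (br a b) \<and> br a (sscal z b) = sscal z (br a b)) \<and>
     (\<forall>p q a b. homog m n p a \<longrightarrow> homog m n q b \<longrightarrow> homog m n (p \<noteq> q) (br a b)) \<and>
     (\<forall>p q a b. homog m n p a \<longrightarrow> homog m n q b \<longrightarrow>
        br a b = sneg (sscal (ssign p q) (br b a))) \<and>
     (\<forall>p q a b c. homog m n p a \<longrightarrow> homog m n q b \<longrightarrow> c \<in> Ahat m n \<longrightarrow>
        br a (smult b c) = sadd (smult (br a b) c) (sscal (ssign p q) (smult b (br a c)))) \<and>
     (\<forall>p q a b c. homog m n p a \<longrightarrow> homog m n q b \<longrightarrow> c \<in> Ahat m n \<longrightarrow>
        br a (br b c) = sadd (br (br a b) c) (sscal (ssign p q) (br b (br a c)))) \<and>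
     (\<forall>k. \<exists>l. \<forall>a\<in>mhat m n l. \<forall>b\<in>Ahat m n. br a b \<in> mhat m n k \<and> br b a \<in> mhat m n k)"

text \<open>The Poisson superalgebra \<open>\<And>(\<complex>h) \<otimes> B\<close>: an element 1\<otimes>b0 + h\<otimes>b1 is the pair (b0, b1).
  Super tensor product sign rules, with h odd, h*h = 0, {h,h} = 1, {1,-} = 0:
   (x\<otimes>y)(x'\<otimes>y') = (-1)^{|y||x'|} xx'\<otimes>yy',
   {x\<otimes>y, x'\<otimes>y'} = (-1)^{|y||x'|} ({x,x'}\<otimes>yy' + xx'\<otimes>{y,y'}).\<close>
definition tadd :: "ser \<times> ser \<Rightarrow> ser \<times> ser \<Rightarrow> ser \<times> ser" where
  "tadd x y = (sadd (fst x) (fst y), sadd (snd x) (snd y))"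
definition tscal :: "complex \<Rightarrow> ser \<times> ser \<Rightarrow> ser \<times> ser" where
  "tscal c x = (sscal c (fst x), sscal c (snd x))"
definition tone :: "ser \<times> ser" where "tone = (sone, szero)"
definition tmult :: "ser \<times> ser \<Rightarrow> ser \<times> ser \<Rightarrow> ser \<times> ser" where
  "tmult x y = (smult (fst x) (fst y),
                sadd (smult (spar (fst x)) (snd y)) (smult (snd x) (fst y)))"
definition tbr :: "(ser \<Rightarrow> ser \<Rightarrow> ser) \<Rightarrow> ser \<times> ser \<Rightarrow> ser \<times> ser \<Rightarrow> ser \<times> ser" where
  "tbr br x y = (sadd (br (fst x) (fst y)) (smult (spar (snd x)) (snd y)),
                 sadd (br (spar (fst x)) (snd y)) (br (snd x) (fst y)))"
definition tpar :: "ser \<times> ser \<Rightarrow> ser \<times> ser" where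
  "tpar x = (spar (fst x), sneg (spar (snd x)))"

end

theory Submission
  imports Defs "HOL-Computational_Algebra.Formal_Power_Series"
begin

text \<open>
  (i) The odd element h0 = l f + u g has an even bracket {h0, h0} whose constant term is
  l^2 {f,f}(0) + 2 l u + u^2 {g,g}(0); choosing l, u makes it 1, so {h0, h0} = 1 + s with s in
  the maximal ideal.  Substituting s into the binomial series gives an even
  v = (1 + s)^(-1/2).  By Jacobi {h0, {h0, h0}} = 0, and applying {h0, -} to v^2 (1 + s) = 1
  then forces {h0, v} = 0; hence h = h0 v satisfies {h, h} = v^2 {h0, h0} = 1.

  (ii) If h is odd with {h, h} = 1, then ad_h is an odd derivation with ad_h^2 = 0 and
  ad_h (h b) = b - h ad_h b.  So every a is uniquely b0 + h b1 with b1 = {h, a} and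
  b0 = a - h {h, a}, both in B1 = ker ad_h, and the Leibniz rule turns products and brackets
  of such sums into the sign rules of the super tensor product.
\<close>

lemma fun_diff_diff_cancel:
  fixes \<alpha> \<beta> :: "'a \<Rightarrow> nat"
  shows "\<beta> \<le> \<alpha> \<Longrightarrow> \<alpha> - (\<alpha> - \<beta>) = \<beta>"
  by (auto simp: le_fun_def fun_eq_iff)

lemma finite_atMost_fun:
  fixes \<alpha> :: "nat \<Rightarrow> nat"
  assumes "\<forall>i\<ge>m. \<alpha> i = 0"
  shows "finite {..\<alpha>}"
proof (rule finite_subset)
  let ?B = "{..\<Sum>i<m. \<alpha> i}"
  show "{..\<alpha>} \<subseteq> {\<beta>. \<forall>i. (i \<in> {..<m} \<longrightarrow> \<beta> i \<in> ?B) \<and> (i \<notin> {..<m} \<longrightarrow> \<beta> i = 0)}"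
  proof (intro subsetI CollectI allI conjI impI)
    fix \<beta> i assume "\<beta> \<in> {..\<alpha>}"
    then have le: "\<beta> i \<le> \<alpha> i" by (simp add: le_fun_def)
    show "\<beta> i = 0" if "i \<notin> {..<m}" using le assms that by simp
    show "\<beta> i \<in> ?B" if "i \<in> {..<m}"
      using le member_le_sum[of i "{..<m}" \<alpha>] that by simp
  qed
  show "finite {\<beta>. \<forall>i. (i \<in> {..<m} \<longrightarrow> \<beta> i \<in> ?B) \<and> (i \<notin> {..<m} \<longrightarrow> \<beta> i = 0)}"
    by (rule finite_set_of_finite_funs) auto
qed

lemma card_Diff_add:
  assumes "T \<subseteq> S" "finite S"
  shows "card S = card T + card (S - T)"
  using assms by (metis card_Diff_subset card_mono finite_subset le_add_diff_inverse)

lemma sum_atMost_fun_flip: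
  fixes \<alpha> :: "nat \<Rightarrow> nat"
  shows "(\<Sum>\<beta>\<le>\<alpha>. f \<beta>) = (\<Sum>\<beta>\<le>\<alpha>. f (\<alpha> - \<beta>))"
  by (rule sum.reindex_bij_witness[where i="\<lambda>\<beta>. \<alpha> - \<beta>" and j="\<lambda>\<beta>. \<alpha> - \<beta>"])
     (auto simp: fun_diff_diff_cancel, simp_all add: le_fun_def)

lemma sum_Pow_flip: "finite S \<Longrightarrow> (\<Sum>T\<in>Pow S. f T) = (\<Sum>T\<in>Pow S. f (S - T))"
  by (rule sum.reindex_bij_witness[where i="\<lambda>T. S - T" and j="\<lambda>T. S - T"]) (auto simp: double_diff)

lemma sum_atMost_fun_reassoc:
  fixes \<alpha> :: "nat \<Rightarrow> nat"
  assumes fin: "finite {..\<alpha>}"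
  shows "(\<Sum>\<beta>\<le>\<alpha>. \<Sum>\<gamma>\<le>\<beta>. G \<gamma> (\<beta> - \<gamma>) (\<alpha> - \<beta>)) = (\<Sum>\<gamma>\<le>\<alpha>. \<Sum>\<delta>\<le>\<alpha> - \<gamma>. G \<gamma> \<delta> (\<alpha> - \<gamma> - \<delta>))"
proof -
  have fin_le: "finite {..\<beta>}" if "\<beta> \<le> \<alpha>" for \<beta>
    using fin by (rule finite_subset[rotated]) (use that in auto)
  have fin_diff: "finite {..\<alpha> - \<gamma>}" for \<gamma>
    using fin_le by (simp add: le_fun_def)
  have diff_diff: "\<alpha> - \<gamma> - (\<beta> - \<gamma>) = \<alpha> - \<beta>" if "\<gamma> \<le> \<beta>" "\<beta> \<le> \<alpha>" for \<beta> \<gamma>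
    using that by (auto simp: le_fun_def fun_eq_iff)
  have "(\<Sum>\<beta>\<le>\<alpha>. \<Sum>\<gamma>\<le>\<beta>. G \<gamma> (\<beta> - \<gamma>) (\<alpha> - \<beta>)) = (\<Sum>(\<beta>,\<gamma>)\<in>Sigma {..\<alpha>} atMost. G \<gamma> (\<beta> - \<gamma>) (\<alpha> - \<beta>))"
    using fin fin_le by (intro sum.Sigma) auto
  also have "\<dots> = (\<Sum>(\<gamma>,\<delta>)\<in>Sigma {..\<alpha>} (\<lambda>\<gamma>. {..\<alpha> - \<gamma>}). G \<gamma> \<delta> (\<alpha> - \<gamma> - \<delta>))"
    by (rule sum.reindex_bij_witness[where i="\<lambda>(\<gamma>,\<delta>). (\<lambda>i. \<gamma> i + \<delta> i, \<gamma>)" and j="\<lambda>(\<beta>,\<gamma>). (\<gamma>, \<beta> - \<gamma>)"])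
       (auto simp: diff_diff, auto simp: le_fun_def fun_eq_iff diff_le_mono le_diff_conv2 add.commute)
  also have "\<dots> = (\<Sum>\<gamma>\<le>\<alpha>. \<Sum>\<delta>\<le>\<alpha> - \<gamma>. G \<gamma> \<delta> (\<alpha> - \<gamma> - \<delta>))"
    using fin fin_diff by (intro sum.Sigma[symmetric]) auto
  finally show ?thesis .
qed

lemma sum_Pow_reassoc:
  assumes fin: "finite S"
  shows "(\<Sum>T\<in>Pow S. \<Sum>R\<in>Pow T. H R (T - R) (S - T)) = (\<Sum>R\<in>Pow S. \<Sum>U\<in>Pow (S - R). H R U (S - R - U))"
proof -
  have diff_diff: "S - R - (T - R) = S - T" if "R \<subseteq> T" for R T
    using that by auto
  have "(\<Sum>T\<in>Pow S. \<Sum>R\<in>Pow T. H R (T - R) (S - T)) = (\<Sum>(T,R)\<in>Sigma (Pow S) Pow. H R (T - R) (S - T))"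
    using fin by (intro sum.Sigma) (auto intro: finite_subset)
  also have "\<dots> = (\<Sum>(R,U)\<in>Sigma (Pow S) (\<lambda>R. Pow (S - R)). H R U (S - R - U))"
    by (rule sum.reindex_bij_witness[where i="\<lambda>(R,U). (R \<union> U, R)" and j="\<lambda>(T,R). (R, T - R)"])
       (auto simp: diff_diff)
  also have "\<dots> = (\<Sum>R\<in>Pow S. \<Sum>U\<in>Pow (S - R). H R U (S - R - U))"
    using fin by (intro sum.Sigma[symmetric]) auto
  finally show ?thesis .
qed

lemma sum_swap_outer_pair:
  "(\<Sum>x\<in>X. \<Sum>y\<in>Y. \<Sum>i\<in>I. \<Sum>j\<in>J. f x y i j) = (\<Sum>i\<in>I. \<Sum>j\<in>J. \<Sum>x\<in>X. \<Sum>y\<in>Y. f x y i j)"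
proof -
  have "(\<Sum>y\<in>Y. \<Sum>i\<in>I. \<Sum>j\<in>J. f x y i j) = (\<Sum>i\<in>I. \<Sum>j\<in>J. \<Sum>y\<in>Y. f x y i j)" for x
    by (subst sum.swap) (rule sum.cong[OF refl], rule sum.swap)
  then have "(\<Sum>x\<in>X. \<Sum>y\<in>Y. \<Sum>i\<in>I. \<Sum>j\<in>J. f x y i j) = (\<Sum>x\<in>X. \<Sum>i\<in>I. \<Sum>j\<in>J. \<Sum>y\<in>Y. f x y i j)"
    by simp
  also have "\<dots> = (\<Sum>i\<in>I. \<Sum>j\<in>J. \<Sum>x\<in>X. \<Sum>y\<in>Y. f x y i j)"
    by (subst sum.swap) (rule sum.cong[OF refl], rule sum.swap)
  finally show ?thesis .
qed

definition inversions :: "nat set \<Rightarrow> nat set \<Rightarrow> (nat \<times> nat) set" where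
  "inversions T U = {(i, j). i \<in> T \<and> j \<in> U \<and> j < i}"

lemma shuffle_sign_inversions: "shuffle_sign T U = (-1) ^ card (inversions T U)"
  unfolding shuffle_sign_def inversions_def by simp

lemma finite_inversions: "finite T \<Longrightarrow> finite U \<Longrightarrow> finite (inversions T U)"
  by (rule finite_subset[of _ "T \<times> U"]) (auto simp: inversions_def)

lemma shuffle_sign_empty [simp]: "shuffle_sign {} U = 1" "shuffle_sign T {} = 1"
  unfolding shuffle_sign_def by simp_all

lemma shuffle_sign_assoc:
  assumes "finite R" "finite U" "finite W" "R \<inter> U = {}" "R \<inter> W = {}" "U \<inter> W = {}"
  shows "shuffle_sign (R \<union> U) W * shuffle_sign R U = shuffle_sign R (U \<union> W) * shuffle_sign U W"
proof -
  have "inversions (R \<union> U) W = inversions R W \<union> inversions U W"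
    "inversions R (U \<union> W) = inversions R U \<union> inversions R W"
    "inversions R W \<inter> inversions U W = {}" "inversions R U \<inter> inversions R W = {}"
    using assms by (auto simp: inversions_def)
  then show ?thesis
    using assms by (simp add: shuffle_sign_inversions card_Un_disjoint finite_inversions power_add)
qed

lemma shuffle_sign_commute:
  assumes "finite T" "finite U" "T \<inter> U = {}"
  shows "shuffle_sign T U = (-1) ^ (card T * card U) * shuffle_sign U T"
proof -
  let ?flip = "\<lambda>(i, j). (j, i)"
  have "T \<times> U = inversions T U \<union> ?flip ` inversions U T"
    "inversions T U \<inter> ?flip ` inversions U T = {}"
    using assms by (auto simp: inversions_def image_iff)
  then have "card T * card U = card (inversions T U) + card (?flip ` inversions U T)"
    unfolding card_cartesian_product[symmetric] using assms
    by (simp add: card_Un_disjoint finite_inversions)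
  also have "card (?flip ` inversions U T) = card (inversions U T)"
    by (rule card_image) (auto simp: inj_on_def)
  finally show ?thesis
    unfolding shuffle_sign_inversions by (simp add: power_add power_mult)
qed

section \<open>The algebra of super power series\<close>

lemmas ser_defs = sadd_def sneg_def sscal_def szero_def fun_eq_iff

lemma AhatD: "a \<in> Ahat m n \<Longrightarrow> \<not> valid_idx m n \<alpha> S \<Longrightarrow> a \<alpha> S = 0"
  unfolding Ahat_def by simp

lemma Ahat_eqI:
  assumes "a \<in> Ahat m n" "b \<in> Ahat m n" "\<And>\<alpha> S. valid_idx m n \<alpha> S \<Longrightarrow> a \<alpha> S = b \<alpha> S"
  shows "a = b"
  using assms unfolding Ahat_def by (auto simp: fun_eq_iff) (metis)

lemma valid_idx_finite_atMost: "valid_idx m n \<alpha> S \<Longrightarrow> finite {..\<alpha>}"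
  unfolding valid_idx_def by (auto intro: finite_atMost_fun)

lemma valid_idx_finite: "valid_idx m n \<alpha> S \<Longrightarrow> finite S"
  unfolding valid_idx_def by (auto intro: finite_subset)

lemma sadd_Ahat [intro]: "a \<in> Ahat m n \<Longrightarrow> b \<in> Ahat m n \<Longrightarrow> sadd a b \<in> Ahat m n"
  unfolding Ahat_def sadd_def by auto

lemma sscal_Ahat [intro]: "a \<in> Ahat m n \<Longrightarrow> sscal z a \<in> Ahat m n"
  unfolding Ahat_def sscal_def by auto

lemma sneg_Ahat [intro]: "a \<in> Ahat m n \<Longrightarrow> sneg a \<in> Ahat m n"
  unfolding Ahat_def sneg_def by auto

lemma spar_Ahat [intro]: "a \<in> Ahat m n \<Longrightarrow> spar a \<in> Ahat m n"
  unfolding Ahat_def spar_def by auto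

lemma sone_Ahat [intro]: "sone \<in> Ahat m n"
  unfolding Ahat_def sone_def valid_idx_def by auto

lemma sadd_szero [simp]: "sadd szero a = a" "sadd a szero = a"
  by (simp_all add: ser_defs)

lemma sneg_szero [simp]: "sneg szero = szero"
  by (simp add: ser_defs)

lemma sscal_szero [simp]: "sscal z szero = szero" "sscal 0 a = szero"
  by (simp_all add: ser_defs)

lemma sscal_one [simp]: "sscal 1 a = a"
  by (simp add: ser_defs)

lemma sscal_sscal [simp]: "sscal c (sscal d a) = sscal (c * d) a"
  by (simp add: ser_defs)

lemma sneg_eq_sscal: "sneg a = sscal (-1) a"
  unfolding sneg_def sscal_def by simp

lemma sadd_sscal_sscal: "sadd (sscal c x) (sscal d x) = sscal (c + d) x"
  by (simp add: ser_defs algebra_simps)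

lemma sadd_right_cancel: "sadd a c = sadd b c \<Longrightarrow> a = b"
  by (simp add: ser_defs)

lemma sscal_fixed_eq_szero:
  assumes "sscal c x = x" "c \<noteq> 1"
  shows "x = szero"
proof -
  have "(c - 1) * x \<alpha> S = 0" for \<alpha> S
    using assms(1) by (simp add: ser_defs algebra_simps) (metis mult.commute)
  then show ?thesis using assms(2) by (simp add: szero_def fun_eq_iff)
qed

lemma spar_sadd: "spar (sadd a b) = sadd (spar a) (spar b)"
  by (simp add: ser_defs spar_def algebra_simps)

lemma smult_eq:
  "smult a b \<alpha> S = (\<Sum>\<beta>\<le>\<alpha>. \<Sum>T\<in>Pow S. shuffle_sign T (S - T) * a \<beta> T * b (\<alpha> - \<beta>) (S - T))"
proof -
  have "{\<beta>. \<forall>i. \<beta> i \<le> \<alpha> i} = {..\<alpha>}" by (auto simp: le_fun_def)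
  then show ?thesis by (simp add: smult_def fun_diff_def)
qed

lemma smult_summand_eq_0:
  assumes "a \<in> Ahat m n" "b \<in> Ahat m n" "\<not> valid_idx m n \<alpha> S" "\<beta> \<le> \<alpha>" "T \<subseteq> S"
  shows "a \<beta> T * b (\<alpha> - \<beta>) (S - T) = 0"
proof -
  have "\<not> valid_idx m n \<beta> T \<or> \<not> valid_idx m n (\<alpha> - \<beta>) (S - T)"
    using assms(3-5) unfolding valid_idx_def le_fun_def
    by (auto simp: subset_iff)
  then show ?thesis using assms(1,2) AhatD by (metis mult_eq_0_iff)
qed

lemma smult_Ahat [intro]:
  assumes "a \<in> Ahat m n" "b \<in> Ahat m n"
  shows "smult a b \<in> Ahat m n"
  unfolding Ahat_def mem_Collect_eq smult_eq
  using smult_summand_eq_0[OF assms] by (auto intro!: sum.neutral simp: mult.assoc)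

lemma smult_assoc:
  assumes a: "a \<in> Ahat m n" and b: "b \<in> Ahat m n" and c: "c \<in> Ahat m n"
  shows "smult (smult a b) c = smult a (smult b c)"
proof (rule Ahat_eqI)
  show "smult (smult a b) c \<in> Ahat m n" "smult a (smult b c) \<in> Ahat m n"
    using a b c by auto
  fix \<alpha> S assume v: "valid_idx m n \<alpha> S"
  have finS: "finite S" using v by (rule valid_idx_finite)
  \<comment> \<open>Both sides sum over splittings of \<open>\<alpha>\<close> into three multi-indices and of \<open>S\<close> into three
    disjoint sets; the signs agree by \<open>shuffle_sign_assoc\<close>.\<close>
  define F where "F = (\<lambda>x y z R U W. shuffle_sign (R \<union> U) W * shuffle_sign R U * a x R * b y U * c z W)"
  have "smult (smult a b) c \<alpha> S = (\<Sum>\<beta>\<le>\<alpha>. \<Sum>T\<in>Pow S. \<Sum>\<gamma>\<le>\<beta>. \<Sum>R\<in>Pow T.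
       shuffle_sign T (S - T) * (shuffle_sign R (T - R) * a \<gamma> R * b (\<beta> - \<gamma>) (T - R)) * c (\<alpha> - \<beta>) (S - T))"
    unfolding smult_eq by (simp add: sum_distrib_left sum_distrib_right)
  also have "\<dots> = (\<Sum>\<beta>\<le>\<alpha>. \<Sum>\<gamma>\<le>\<beta>. \<Sum>T\<in>Pow S. \<Sum>R\<in>Pow T. F \<gamma> (\<beta> - \<gamma>) (\<alpha> - \<beta>) R (T - R) (S - T))"
    by (intro sum.cong refl, subst sum.swap) (auto intro!: sum.cong simp: F_def Un_absorb1 mult_ac)
  also have "\<dots> = (\<Sum>\<gamma>\<le>\<alpha>. \<Sum>\<delta>\<le>\<alpha> - \<gamma>. \<Sum>T\<in>Pow S. \<Sum>R\<in>Pow T. F \<gamma> \<delta> (\<alpha> - \<gamma> - \<delta>) R (T - R) (S - T))"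
    using valid_idx_finite_atMost[OF v] by (rule sum_atMost_fun_reassoc)
  also have "\<dots> = (\<Sum>\<gamma>\<le>\<alpha>. \<Sum>\<delta>\<le>\<alpha> - \<gamma>. \<Sum>R\<in>Pow S. \<Sum>U\<in>Pow (S - R). F \<gamma> \<delta> (\<alpha> - \<gamma> - \<delta>) R U (S - R - U))"
    using finS by (intro sum.cong refl sum_Pow_reassoc)
  also have "\<dots> = (\<Sum>\<gamma>\<le>\<alpha>. \<Sum>R\<in>Pow S. \<Sum>\<delta>\<le>\<alpha> - \<gamma>. \<Sum>U\<in>Pow (S - R).
       shuffle_sign R (S - R) * a \<gamma> R * (shuffle_sign U (S - R - U) * b \<delta> U * c (\<alpha> - \<gamma> - \<delta>) (S - R - U)))"
  proof (intro sum.cong refl, subst sum.swap, intro sum.cong refl)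
    fix R U x y z assume "R \<in> Pow S" "U \<in> Pow (S - R)"
    then have "shuffle_sign (R \<union> U) (S - R - U) * shuffle_sign R U
        = shuffle_sign R (S - R) * shuffle_sign U (S - R - U)"
      using finS shuffle_sign_assoc[of R U "S - R - U"] by (auto intro: finite_subset simp: Un_Diff_cancel2 Un_absorb1)
    then show "F x y z R U (S - R - U)
        = shuffle_sign R (S - R) * a x R * (shuffle_sign U (S - R - U) * b y U * c z (S - R - U))"
      unfolding F_def by (simp add: mult_ac)
  qed
  also have "\<dots> = smult a (smult b c) \<alpha> S"
    unfolding smult_eq by (simp add: sum_distrib_left)
  finally show "smult (smult a b) c \<alpha> S = smult a (smult b c) \<alpha> S" .
qed

lemma sone_eq: "sone \<beta> T = (if \<beta> = (\<lambda>_. 0) \<and> T = {} then 1 else 0)"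
  unfolding sone_def by (auto simp: fun_eq_iff)

lemma smult_sone_left:
  assumes a: "a \<in> Ahat m n"
  shows "smult sone a = a"
proof (rule Ahat_eqI)
  show "smult sone a \<in> Ahat m n" "a \<in> Ahat m n" using a by auto
  fix \<alpha> S assume v: "valid_idx m n \<alpha> S"
  have "smult sone a \<alpha> S = (\<Sum>\<beta>\<le>\<alpha>. if \<beta> = (\<lambda>_. 0) then (\<Sum>T\<in>Pow S. if T = {} then a \<alpha> S else 0) else 0)"
    unfolding smult_eq sone_eq by (intro sum.cong refl) (auto simp: fun_diff_def intro!: sum.cong)
  also have "\<dots> = a \<alpha> S"
    using valid_idx_finite_atMost[OF v] valid_idx_finite[OF v] by (simp add: le_fun_def)
  finally show "smult sone a \<alpha> S = a \<alpha> S" .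
qed

lemma smult_sone_right:
  assumes a: "a \<in> Ahat m n"
  shows "smult a sone = a"
proof (rule Ahat_eqI)
  show "smult a sone \<in> Ahat m n" "a \<in> Ahat m n" using a by auto
  fix \<alpha> S assume v: "valid_idx m n \<alpha> S"
  have "\<alpha> - \<beta> = (\<lambda>_. 0) \<longleftrightarrow> \<beta> = \<alpha>" if "\<beta> \<le> \<alpha>" for \<beta>
    using that by (auto simp: le_fun_def fun_eq_iff intro: antisym)
  moreover have "S - T = {} \<longleftrightarrow> T = S" if "T \<subseteq> S" for T
    using that by auto
  ultimately have "smult a sone \<alpha> S = (\<Sum>\<beta>\<le>\<alpha>. if \<beta> = \<alpha> then (\<Sum>T\<in>Pow S. if T = S then a \<alpha> S else 0) else 0)"
    unfolding smult_eq sone_eq by (intro sum.cong refl) (auto intro!: sum.cong)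
  also have "\<dots> = a \<alpha> S"
    using valid_idx_finite_atMost[OF v] valid_idx_finite[OF v] by simp
  finally show "smult a sone \<alpha> S = a \<alpha> S" .
qed

lemma smult_sadd_left: "smult (sadd a b) c = sadd (smult a c) (smult b c)"
  unfolding smult_def sadd_def by (simp add: fun_eq_iff sum.distrib ring_distribs)

lemma smult_sadd_right: "smult c (sadd a b) = sadd (smult c a) (smult c b)"
  unfolding smult_def sadd_def by (simp add: fun_eq_iff sum.distrib ring_distribs)

lemma smult_sscal_left: "smult (sscal z a) b = sscal z (smult a b)"
  unfolding smult_def sscal_def by (simp add: fun_eq_iff sum_distrib_left mult_ac)

lemma smult_sscal_right: "smult a (sscal z b) = sscal z (smult a b)"
  unfolding smult_def sscal_def by (simp add: fun_eq_iff sum_distrib_left mult_ac)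

lemma smult_sneg_right: "smult a (sneg b) = sneg (smult a b)"
  by (simp add: sneg_eq_sscal smult_sscal_right)

lemma smult_szero_left [simp]: "smult szero a = szero"
  unfolding smult_def szero_def by simp

lemma smult_szero_right [simp]: "smult a szero = szero"
  unfolding smult_def szero_def by simp

lemma spar_smult: "spar (smult a b) = smult (spar a) (spar b)"
proof (intro ext)
  fix \<alpha> S
  show "spar (smult a b) \<alpha> S = smult (spar a) (spar b) \<alpha> S"
  proof (cases "finite S")
    case True
    then show ?thesis
      unfolding spar_def smult_def
      by (auto simp: sum_distrib_left power_add mult_ac card_Diff_add intro!: sum.cong)
  qed (simp add: smult_def spar_def)
qed

definition even_part :: "ser \<Rightarrow> ser" where
  "even_part a = (\<lambda>\<alpha> S. if even (card S) then a \<alpha> S else 0)"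

definition odd_part :: "ser \<Rightarrow> ser" where
  "odd_part a = (\<lambda>\<alpha> S. if odd (card S) then a \<alpha> S else 0)"

lemma homog_Ahat [intro]: "homog m n p a \<Longrightarrow> a \<in> Ahat m n"
  unfolding homog_def by simp

lemma homogD: "homog m n p a \<Longrightarrow> odd (card S) \<noteq> p \<Longrightarrow> a \<alpha> S = 0"
  unfolding homog_def by simp

lemma homog_even_part: "a \<in> Ahat m n \<Longrightarrow> homog m n False (even_part a)"
  unfolding homog_def even_part_def Ahat_def by auto

lemma homog_odd_part: "a \<in> Ahat m n \<Longrightarrow> homog m n True (odd_part a)"
  unfolding homog_def odd_part_def Ahat_def by auto

lemma even_part_Ahat [intro]: "a \<in> Ahat m n \<Longrightarrow> even_part a \<in> Ahat m n"
  using homog_even_part by blast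

lemma odd_part_Ahat [intro]: "a \<in> Ahat m n \<Longrightarrow> odd_part a \<in> Ahat m n"
  using homog_odd_part by blast

lemma sadd_even_part_odd_part: "sadd (even_part a) (odd_part a) = a"
  unfolding sadd_def even_part_def odd_part_def by (auto simp: fun_eq_iff)

lemma spar_eq_even_part_odd_part: "spar a = sadd (even_part a) (sneg (odd_part a))"
  unfolding sadd_def even_part_def odd_part_def spar_def sneg_def by (auto simp: fun_eq_iff)

lemma homog_sum_eq_szero:
  assumes "homog m n True x" "homog m n False y" "sadd x y = szero"
  shows "x = szero" "y = szero"
proof -
  have sum: "x \<alpha> S + y \<alpha> S = 0" for \<alpha> S
    using assms(3) by (simp add: ser_defs)
  have "x \<alpha> S = 0 \<and> y \<alpha> S = 0" for \<alpha> S
    using sum[of \<alpha> S] homogD[OF assms(1), of S \<alpha>] homogD[OF assms(2), of S \<alpha>] by (cases "odd (card S)") auto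
  then show "x = szero" "y = szero" by (auto simp: szero_def)
qed

lemma spar_homog: "homog m n p a \<Longrightarrow> spar a = sscal (if p then -1 else 1) a"
  unfolding homog_def spar_def sscal_def
  by (auto simp: fun_eq_iff) (metis neg_one_even_power neg_one_odd_power)+

lemma homog_sadd: "homog m n p a \<Longrightarrow> homog m n p b \<Longrightarrow> homog m n p (sadd a b)"
  unfolding homog_def sadd_def Ahat_def by auto

lemma homog_sscal: "homog m n p a \<Longrightarrow> homog m n p (sscal z a)"
  unfolding homog_def sscal_def Ahat_def by auto

lemma homog_sneg: "homog m n p a \<Longrightarrow> homog m n p (sneg a)"
  unfolding homog_def sneg_def Ahat_def by auto

lemma homog_sone: "homog m n False sone"
  unfolding homog_def sone_def Ahat_def valid_idx_def by auto

lemma homog_smult: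
  assumes a: "homog m n p a" and b: "homog m n q b"
  shows "homog m n (p \<noteq> q) (smult a b)"
  unfolding homog_def
proof (intro conjI allI impI)
  show "smult a b \<in> Ahat m n" using a b by blast
  fix \<alpha> :: "nat \<Rightarrow> nat" and S :: "nat set" assume par: "odd (card S) \<noteq> (p \<noteq> q)"
  show "smult a b \<alpha> S = 0"
  proof (cases "finite S")
    case True
    show ?thesis
      unfolding smult_eq
    proof (intro sum.neutral ballI)
      fix \<beta> T assume "T \<in> Pow S"
      then have "odd (card T) \<noteq> p \<or> odd (card (S - T)) \<noteq> q"
        using par card_Diff_add[of T S] True by auto
      then show "shuffle_sign T (S - T) * a \<beta> T * b (\<alpha> - \<beta>) (S - T) = 0"
        using homogD[OF a] homogD[OF b] by auto
    qed
  qed (simp add: smult_def)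
qed

lemma smult_commute:
  assumes a: "homog m n p a" and b: "homog m n q b"
  shows "smult a b = sscal (ssign p q) (smult b a)"
proof (rule Ahat_eqI)
  show "smult a b \<in> Ahat m n" "sscal (ssign p q) (smult b a) \<in> Ahat m n"
    using a b by blast+
  fix \<alpha> S assume v: "valid_idx m n \<alpha> S"
  have finS: "finite S" using v by (rule valid_idx_finite)
  have "smult b a \<alpha> S = (\<Sum>\<beta>\<le>\<alpha>. \<Sum>T\<in>Pow S.
      shuffle_sign (S - T) (S - (S - T)) * b (\<alpha> - \<beta>) (S - T) * a (\<alpha> - (\<alpha> - \<beta>)) (S - (S - T)))"
    unfolding smult_eq
    by (rule trans[OF sum_atMost_fun_flip], rule sum.cong[OF refl], rule trans[OF sum_Pow_flip[OF finS]], rule refl)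
  also have "\<dots> = (\<Sum>\<beta>\<le>\<alpha>. \<Sum>T\<in>Pow S. shuffle_sign (S - T) T * b (\<alpha> - \<beta>) (S - T) * a \<beta> T)"
    by (intro sum.cong refl) (auto simp: fun_diff_diff_cancel double_diff)
  finally have flip: "smult b a \<alpha> S = \<dots>" .
  have summand: "shuffle_sign T (S - T) * a \<beta> T * b (\<alpha> - \<beta>) (S - T)
     = ssign p q * (shuffle_sign (S - T) T * b (\<alpha> - \<beta>) (S - T) * a \<beta> T)" if T: "T \<subseteq> S" for \<beta> T
  proof (cases "a \<beta> T = 0 \<or> b (\<alpha> - \<beta>) (S - T) = 0")
    case False
    then have "odd (card T) = p" "odd (card (S - T)) = q"
      using homogD[OF a] homogD[OF b] by blast+
    then have "(-1::complex) ^ (card T * card (S - T)) = ssign p q"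
      unfolding ssign_def by (auto simp: power_mult)
    moreover have "finite T" using T finS by (rule finite_subset)
    ultimately show ?thesis
      using shuffle_sign_commute[of T "S - T"] finS by (simp add: mult_ac)
  qed auto
  show "smult a b \<alpha> S = sscal (ssign p q) (smult b a) \<alpha> S"
    unfolding sscal_def flip smult_eq[of a] sum_distrib_left by (intro sum.cong refl) (simp add: summand)
qed

lemma smult_odd_self:
  assumes "homog m n True h"
  shows "smult h h = szero"
  using smult_commute[OF assms assms] by (simp add: ssign_def ser_defs)

lemma smult_even_commute:
  assumes "homog m n False v" "homog m n p a"
  shows "smult a v = smult v a"
  using smult_commute[OF assms(2,1)] by (simp add: ssign_def)

lemma smult_odd_commute:
  assumes h: "homog m n True h" and a: "a \<in> Ahat m n"
  shows "smult a h = smult h (spar a)"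
proof -
  have "smult a h = sadd (smult (even_part a) h) (smult (odd_part a) h)"
    by (simp only: smult_sadd_left[symmetric] sadd_even_part_odd_part)
  also have "\<dots> = sadd (smult h (even_part a)) (sneg (smult h (odd_part a)))"
    using smult_commute[OF homog_even_part[OF a] h] smult_commute[OF homog_odd_part[OF a] h]
    by (simp add: ssign_def sneg_eq_sscal)
  also have "\<dots> = smult h (spar a)"
    by (simp add: spar_eq_even_part_odd_part smult_sadd_right smult_sneg_right)
  finally show ?thesis .
qed

section \<open>Poisson superalgebras\<close>

locale super_poisson =
  fixes m n :: nat and br :: "ser \<Rightarrow> ser \<Rightarrow> ser"
  assumes poisson: "poisson_bracket m n br"
begin

abbreviation "A \<equiv> Ahat m n"

lemmas bracket_laws = poisson[unfolded poisson_bracket_def]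

lemma br_Ahat [intro]: "a \<in> A \<Longrightarrow> b \<in> A \<Longrightarrow> br a b \<in> A"
  using bracket_laws[THEN conjunct1] by blast

lemma br_sadd_left: "a \<in> A \<Longrightarrow> b \<in> A \<Longrightarrow> c \<in> A \<Longrightarrow> br (sadd a b) c = sadd (br a c) (br b c)"
  using bracket_laws[THEN conjunct2, THEN conjunct1] by blast

lemma br_sadd_right: "a \<in> A \<Longrightarrow> b \<in> A \<Longrightarrow> c \<in> A \<Longrightarrow> br c (sadd a b) = sadd (br c a) (br c b)"
  using bracket_laws[THEN conjunct2, THEN conjunct1] by blast

lemma br_sscal_left: "a \<in> A \<Longrightarrow> b \<in> A \<Longrightarrow> br (sscal z a) b = sscal z (br a b)"
  using bracket_laws[THEN conjunct2, THEN conjunct2, THEN conjunct1] by blast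

lemma br_sscal_right: "a \<in> A \<Longrightarrow> b \<in> A \<Longrightarrow> br a (sscal z b) = sscal z (br a b)"
  using bracket_laws[THEN conjunct2, THEN conjunct2, THEN conjunct1] by blast

lemma br_homog: "homog m n p a \<Longrightarrow> homog m n q b \<Longrightarrow> homog m n (p \<noteq> q) (br a b)"
  using bracket_laws[THEN conjunct2, THEN conjunct2, THEN conjunct2, THEN conjunct1] by blast

lemma br_antisym: "homog m n p a \<Longrightarrow> homog m n q b \<Longrightarrow> br a b = sneg (sscal (ssign p q) (br b a))"
  using bracket_laws[THEN conjunct2, THEN conjunct2, THEN conjunct2, THEN conjunct2, THEN conjunct1] by blast

lemma br_leibniz: "homog m n p a \<Longrightarrow> homog m n q b \<Longrightarrow> c \<in> A \<Longrightarrow>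
    br a (smult b c) = sadd (smult (br a b) c) (sscal (ssign p q) (smult b (br a c)))"
  using bracket_laws[THEN conjunct2, THEN conjunct2, THEN conjunct2, THEN conjunct2, THEN conjunct2, THEN conjunct1]
  by blast

lemma br_jacobi: "homog m n p a \<Longrightarrow> homog m n q b \<Longrightarrow> c \<in> A \<Longrightarrow>
    br a (br b c) = sadd (br (br a b) c) (sscal (ssign p q) (br b (br a c)))"
  using bracket_laws[THEN conjunct2, THEN conjunct2, THEN conjunct2, THEN conjunct2, THEN conjunct2, THEN conjunct2,
      THEN conjunct1]
  by blast

lemma br_sneg_right: "a \<in> A \<Longrightarrow> b \<in> A \<Longrightarrow> br a (sneg b) = sneg (br a b)"
  by (simp add: sneg_eq_sscal br_sscal_right)

lemma br_homog_sone:
  assumes a: "homog m n p a"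
  shows "br a sone = szero"
proof -
  have "br a (smult sone sone) = sadd (smult (br a sone) sone) (smult sone (br a sone))"
    using br_leibniz[OF a homog_sone sone_Ahat] by (simp add: ssign_def)
  moreover have "br a sone \<in> A" using a by blast
  ultimately have "br a sone = sadd (br a sone) (br a sone)"
    by (simp add: smult_sone_left smult_sone_right sone_Ahat)
  then show ?thesis
    using sadd_right_cancel[of szero "br a sone" "br a sone"] by simp
qed

lemma br_sone_left:
  assumes a: "a \<in> A"
  shows "br sone a = szero"
proof -
  have "br sone b = szero" if b: "homog m n p b" for p b
    using br_antisym[OF homog_sone b] by (simp add: br_homog_sone[OF b])
  then have "br sone (even_part a) = szero" "br sone (odd_part a) = szero"
    using a homog_even_part homog_odd_part by blast+
  then show ?thesis
    using br_sadd_right[of "even_part a" "odd_part a" sone] a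
    by (simp add: sadd_even_part_odd_part even_part_Ahat odd_part_Ahat sone_Ahat)
qed

end

section \<open>Splitting off an odd element with bracket one\<close>

locale odd_unit = super_poisson +
  fixes h :: ser
  assumes h_odd: "homog m n True h" and br_h_h: "br h h = sone"
begin

lemma h_Ahat [intro]: "h \<in> A"
  using h_odd by blast

lemma smult_h_smult_h: "x \<in> A \<Longrightarrow> smult h (smult h x) = szero"
  by (simp only: smult_assoc[OF h_Ahat h_Ahat, symmetric] smult_odd_self[OF h_odd] smult_szero_left)

lemma br_h_br_h:
  assumes c: "c \<in> A"
  shows "br h (br h c) = szero"
proof (rule sscal_fixed_eq_szero)
  have "br h (br h c) = sadd (br (br h h) c) (sscal (ssign True True) (br h (br h c)))"
    by (rule br_jacobi[OF h_odd h_odd c])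
  then show "sscal (-1) (br h (br h c)) = br h (br h c)"
    by (simp add: br_h_h br_sone_left[OF c] ssign_def)
qed simp

lemma br_h_smult_h:
  assumes b: "b \<in> A"
  shows "br h (smult h b) = sadd b (sneg (smult h (br h b)))"
  using br_leibniz[OF h_odd h_odd b]
  by (simp add: br_h_h smult_sone_left[OF b] ssign_def sneg_eq_sscal)

lemma br_h_parts_eq_szero:
  assumes b: "b \<in> A" and hb: "br h b = szero"
  shows "br h (even_part b) = szero" "br h (odd_part b) = szero"
proof -
  have "sadd (br h (even_part b)) (br h (odd_part b)) = br h (sadd (even_part b) (odd_part b))"
    using b by (intro br_sadd_right[symmetric] even_part_Ahat odd_part_Ahat h_Ahat)
  also have "\<dots> = szero"
    by (simp only: sadd_even_part_odd_part hb)
  finally show "br h (even_part b) = szero" "br h (odd_part b) = szero"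
    using homog_sum_eq_szero br_homog[OF h_odd homog_even_part[OF b]] br_homog[OF h_odd homog_odd_part[OF b]]
    by simp_all
qed

lemma br_kernel_smult_h_homog:
  assumes b: "homog m n p b" and hb: "br h b = szero" and c: "c \<in> A"
  shows "br b (smult h c) = smult h (br (spar b) c)"
proof -
  have "br b h = szero"
    using br_antisym[OF b h_odd] by (simp add: hb)
  then have "br b (smult h c) = sscal (ssign p True) (smult h (br b c))"
    using br_leibniz[OF b h_odd c] by simp
  also have "\<dots> = smult h (br (spar b) c)"
    using b c by (simp add: spar_homog[OF b] br_sscal_left smult_sscal_right ssign_def homog_Ahat)
  finally show ?thesis .
qed

lemma br_kernel_smult_h:
  assumes b: "b \<in> A" and hb: "br h b = szero" and c: "c \<in> A"
  shows "br b (smult h c) = smult h (br (spar b) c)"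
proof -
  have hc: "smult h c \<in> A" using c by blast
  have "br b (smult h c) = br (sadd (even_part b) (odd_part b)) (smult h c)"
    by (simp only: sadd_even_part_odd_part)
  also have "\<dots> = sadd (br (even_part b) (smult h c)) (br (odd_part b) (smult h c))"
    using b hc by (intro br_sadd_left even_part_Ahat odd_part_Ahat)
  also have "\<dots> = sadd (smult h (br (spar (even_part b)) c)) (smult h (br (spar (odd_part b)) c))"
    by (simp only: br_kernel_smult_h_homog[OF homog_even_part[OF b] br_h_parts_eq_szero(1)[OF b hb] c]
        br_kernel_smult_h_homog[OF homog_odd_part[OF b] br_h_parts_eq_szero(2)[OF b hb] c])
  also have "\<dots> = smult h (br (sadd (spar (even_part b)) (spar (odd_part b))) c)"
    using b c by (simp only: smult_sadd_right br_sadd_left spar_Ahat even_part_Ahat odd_part_Ahat)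
  also have "sadd (spar (even_part b)) (spar (odd_part b)) = spar b"
    by (simp only: spar_sadd[symmetric] sadd_even_part_odd_part)
  finally show ?thesis .
qed

lemma br_smult_h_kernel_homog:
  assumes b: "homog m n q b" and c: "homog m n r c" and hc: "br h c = szero"
  shows "br (smult h b) c = smult h (br b c)"
proof -
  have "br c h = szero"
    using br_antisym[OF c h_odd] by (simp add: hc)
  then have "br c (smult h b) = sscal (ssign r True) (smult h (br c b))"
    using br_leibniz[OF c h_odd homog_Ahat[OF b]] by simp
  then show ?thesis
    using br_antisym[OF homog_smult[OF h_odd b] c] br_antisym[OF c b]
    by (cases q; cases r) (simp_all add: ssign_def sneg_eq_sscal smult_sscal_right)
qed

lemma br_smult_h_homog_kernel:
  assumes b: "b \<in> A" and c: "homog m n r c" and hc: "br h c = szero"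
  shows "br (smult h b) c = smult h (br b c)"
proof -
  have cA: "c \<in> A" using c by blast
  have "br (smult h b) c = br (sadd (smult h (even_part b)) (smult h (odd_part b))) c"
    by (simp only: smult_sadd_right[symmetric] sadd_even_part_odd_part)
  also have "\<dots> = sadd (br (smult h (even_part b)) c) (br (smult h (odd_part b)) c)"
    using b cA by (intro br_sadd_left smult_Ahat even_part_Ahat odd_part_Ahat h_Ahat)
  also have "\<dots> = sadd (smult h (br (even_part b) c)) (smult h (br (odd_part b) c))"
    by (simp only: br_smult_h_kernel_homog[OF homog_even_part[OF b] c hc]
        br_smult_h_kernel_homog[OF homog_odd_part[OF b] c hc])
  also have "\<dots> = smult h (br (sadd (even_part b) (odd_part b)) c)"
    using b cA by (simp only: smult_sadd_right br_sadd_left even_part_Ahat odd_part_Ahat)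
  finally show ?thesis by (simp only: sadd_even_part_odd_part)
qed

lemma br_smult_h_kernel:
  assumes b: "b \<in> A" and c: "c \<in> A" and hc: "br h c = szero"
  shows "br (smult h b) c = smult h (br b c)"
proof -
  have hb: "smult h b \<in> A" using b by blast
  have "br (smult h b) c = br (smult h b) (sadd (even_part c) (odd_part c))"
    by (simp only: sadd_even_part_odd_part)
  also have "\<dots> = sadd (br (smult h b) (even_part c)) (br (smult h b) (odd_part c))"
    using hb c by (intro br_sadd_right even_part_Ahat odd_part_Ahat)
  also have "\<dots> = sadd (smult h (br b (even_part c))) (smult h (br b (odd_part c)))"
    using br_h_parts_eq_szero[OF c hc]
    by (simp only: br_smult_h_homog_kernel[OF b homog_even_part[OF c]]
        br_smult_h_homog_kernel[OF b homog_odd_part[OF c]])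
  also have "\<dots> = smult h (br b (sadd (even_part c) (odd_part c)))"
    using b c by (simp only: smult_sadd_right br_sadd_right even_part_Ahat odd_part_Ahat)
  finally show ?thesis by (simp only: sadd_even_part_odd_part)
qed

lemma br_smult_h_smult_h_homog:
  assumes b: "homog m n q b" and hb: "br h b = szero" and c: "c \<in> A" and hc: "br h c = szero"
  shows "br (smult h b) (smult h c) = smult (spar b) c"
proof -
  have hb_homog: "homog m n (True \<noteq> q) (smult h b)" by (rule homog_smult[OF h_odd b])
  have bA: "b \<in> A" using b by blast
  have "br h (smult h b) = b"
    using br_h_smult_h[OF bA] by (simp add: hb)
  then have "br (smult h b) h = sneg (sscal (ssign (True \<noteq> q) True) b)"
    using br_antisym[OF hb_homog h_odd] by simp
  moreover have "smult h (br (smult h b) c) = szero"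
    using br_smult_h_kernel[OF bA c hc] bA c by (simp add: smult_h_smult_h br_Ahat)
  ultimately have "br (smult h b) (smult h c) = smult (sneg (sscal (ssign (True \<noteq> q) True) b)) c"
    using br_leibniz[OF hb_homog h_odd c] by simp
  then show ?thesis
    by (cases q) (simp_all add: spar_homog[OF b] ssign_def sneg_eq_sscal smult_sscal_left)
qed

lemma br_smult_h_smult_h:
  assumes b: "b \<in> A" and hb: "br h b = szero" and c: "c \<in> A" and hc: "br h c = szero"
  shows "br (smult h b) (smult h c) = smult (spar b) c"
proof -
  have "br (smult h b) (smult h c) = br (sadd (smult h (even_part b)) (smult h (odd_part b))) (smult h c)"
    by (simp only: smult_sadd_right[symmetric] sadd_even_part_odd_part)
  also have "\<dots> = sadd (br (smult h (even_part b)) (smult h c)) (br (smult h (odd_part b)) (smult h c))"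
    using b c by (intro br_sadd_left smult_Ahat even_part_Ahat odd_part_Ahat h_Ahat)
  also have "\<dots> = sadd (smult (spar (even_part b)) c) (smult (spar (odd_part b)) c)"
    by (simp only: br_smult_h_smult_h_homog[OF homog_even_part[OF b] br_h_parts_eq_szero(1)[OF b hb] c hc]
        br_smult_h_smult_h_homog[OF homog_odd_part[OF b] br_h_parts_eq_szero(2)[OF b hb] c hc])
  also have "\<dots> = smult (spar b) c"
    by (simp only: smult_sadd_left[symmetric] spar_sadd[symmetric] sadd_even_part_odd_part)
  finally show ?thesis .
qed

definition B1 :: "ser set" where
  "B1 = {b \<in> A. br h b = szero}"

definition phi :: "ser \<times> ser \<Rightarrow> ser" where
  "phi x = sadd (fst x) (smult h (snd x))"

lemma B1D: "b \<in> B1 \<Longrightarrow> b \<in> A" "b \<in> B1 \<Longrightarrow> br h b = szero"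
  unfolding B1_def by auto

lemma br_h_phi:
  assumes "x \<in> B1 \<times> B1"
  shows "br h (phi x) = snd x"
proof -
  obtain b c where x: "x = (b, c)" and b: "b \<in> A" "br h b = szero" and c: "c \<in> A" "br h c = szero"
    using assms B1D by (cases x) auto
  have "br h (phi x) = sadd (br h b) (br h (smult h c))"
    unfolding phi_def x using b c by (simp add: br_sadd_right h_Ahat smult_Ahat)
  then show ?thesis
    using br_h_smult_h[OF c(1)] b c x by simp
qed

lemma inj_on_phi: "inj_on phi (B1 \<times> B1)"
proof (rule inj_onI)
  fix x y assume x: "x \<in> B1 \<times> B1" and y: "y \<in> B1 \<times> B1" and eq: "phi x = phi y"
  then have snd_eq: "snd x = snd y"
    using br_h_phi by metis
  with eq have "fst x = fst y"
    unfolding phi_def by (metis sadd_right_cancel)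
  with snd_eq show "x = y" by (simp add: prod_eq_iff)
qed

lemma phi_image: "phi ` (B1 \<times> B1) = A"
proof
  show "phi ` (B1 \<times> B1) \<subseteq> A"
    unfolding phi_def using B1D by (auto intro!: sadd_Ahat smult_Ahat)
  show "A \<subseteq> phi ` (B1 \<times> B1)"
  proof
    fix a assume a: "a \<in> A"
    define c where "c = br h a"
    define b where "b = sadd a (sneg (smult h c))"
    have c: "c \<in> A" "br h c = szero"
      unfolding c_def using a by (auto simp: br_h_br_h)
    have "br h b = sadd (br h a) (sneg (br h (smult h c)))"
      unfolding b_def using a c by (simp add: br_sadd_right br_sneg_right h_Ahat smult_Ahat sneg_Ahat)
    also have "\<dots> = szero"
      using c by (simp add: br_h_smult_h c_def[symmetric]) (simp add: ser_defs)
    finally have "(b, c) \<in> B1 \<times> B1"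
      using a c unfolding B1_def b_def by (auto intro!: sadd_Ahat sneg_Ahat smult_Ahat)
    moreover have "phi (b, c) = a"
      unfolding phi_def b_def by (simp add: ser_defs)
    ultimately show "a \<in> phi ` (B1 \<times> B1)" by force
  qed
qed

lemma bij_betw_phi: "bij_betw phi (B1 \<times> B1) A"
  unfolding bij_betw_def using inj_on_phi phi_image by blast

lemma phi_tone: "phi tone = sone"
  unfolding phi_def tone_def by simp

lemma phi_tadd: "phi (tadd x y) = sadd (phi x) (phi y)"
  unfolding phi_def tadd_def by (simp add: smult_sadd_right) (simp add: ser_defs)

lemma phi_tscal: "phi (tscal c x) = sscal c (phi x)"
  unfolding phi_def tscal_def by (simp add: smult_sscal_right) (simp add: ser_defs algebra_simps)

lemma phi_tpar: "phi (tpar x) = spar (phi x)"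
  unfolding phi_def tpar_def
  by (simp add: spar_sadd spar_smult spar_homog[OF h_odd] smult_sscal_left smult_sneg_right)
     (simp add: ser_defs spar_def)

lemma phi_tmult:
  assumes x: "x \<in> A \<times> A" and y: "y \<in> A \<times> A"
  shows "phi (tmult x y) = smult (phi x) (phi y)"
proof -
  obtain b0 b1 c0 c1 where xy: "x = (b0, b1)" "y = (c0, c1)"
    and A: "b0 \<in> A" "b1 \<in> A" "c0 \<in> A" "c1 \<in> A"
    using x y by auto
  have "smult b0 (smult h c1) = smult h (smult (spar b0) c1)"
    by (simp only: smult_assoc[OF A(1) h_Ahat A(4), symmetric] smult_odd_commute[OF h_odd A(1)]
        smult_assoc[OF h_Ahat spar_Ahat[OF A(1)] A(4)])
  moreover have "smult (smult h b1) c0 = smult h (smult b1 c0)"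
    by (rule smult_assoc[OF h_Ahat A(2,3)])
  moreover have "smult (smult h b1) (smult h c1) = szero"
  proof -
    have "smult (smult h b1) (smult h c1) = smult h (smult (smult b1 h) c1)"
      by (simp only: smult_assoc[OF h_Ahat A(2) smult_Ahat[OF h_Ahat A(4)]] smult_assoc[OF A(2) h_Ahat A(4)])
    also have "\<dots> = smult h (smult h (smult (spar b1) c1))"
      by (simp only: smult_odd_commute[OF h_odd A(2)] smult_assoc[OF h_Ahat spar_Ahat[OF A(2)] A(4)])
    also have "\<dots> = szero"
      using A by (intro smult_h_smult_h smult_Ahat spar_Ahat)
    finally show ?thesis .
  qed
  ultimately show ?thesis
    unfolding phi_def tmult_def xy fst_conv snd_conv
    by (simp only: smult_sadd_left smult_sadd_right) (simp add: ser_defs)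
qed

lemma phi_tbr:
  assumes x: "x \<in> B1 \<times> B1" and y: "y \<in> B1 \<times> B1"
  shows "phi (tbr br x y) = br (phi x) (phi y)"
proof -
  obtain b0 b1 c0 c1 where xy: "x = (b0, b1)" "y = (c0, c1)"
    and b: "b0 \<in> A" "br h b0 = szero" "b1 \<in> A" "br h b1 = szero"
    and c: "c0 \<in> A" "br h c0 = szero" "c1 \<in> A" "br h c1 = szero"
    using x y B1D by (cases x, cases y) auto
  have "br (phi x) (phi y)
      = sadd (sadd (br b0 c0) (br b0 (smult h c1))) (sadd (br (smult h b1) c0) (br (smult h b1) (smult h c1)))"
    unfolding phi_def xy fst_conv snd_conv using b c
    by (simp add: br_sadd_left br_sadd_right sadd_Ahat smult_Ahat h_Ahat) (simp add: ser_defs ac_simps)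
  also have "\<dots> = sadd (sadd (br b0 c0) (smult h (br (spar b0) c1))) (sadd (smult h (br b1 c0)) (smult (spar b1) c1))"
    by (simp only: br_kernel_smult_h[OF b(1,2) c(3)] br_smult_h_kernel[OF b(3) c(1,2)]
        br_smult_h_smult_h[OF b(3,4) c(3,4)])
  also have "\<dots> = phi (tbr br x y)"
    unfolding phi_def tbr_def xy fst_conv snd_conv by (simp only: smult_sadd_right) (simp add: ser_defs)
  finally show ?thesis by simp
qed

lemma phi_poisson_isomorphism:
  "bij_betw phi (B1 \<times> B1) A \<and> phi tone = sone \<and>
   (\<forall>x\<in>B1 \<times> B1. \<forall>y\<in>B1 \<times> B1.
      phi (tadd x y) = sadd (phi x) (phi y) \<and>
      phi (tmult x y) = smult (phi x) (phi y) \<and>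
      phi (tbr br x y) = br (phi x) (phi y)) \<and>
   (\<forall>c. \<forall>x\<in>B1 \<times> B1. phi (tscal c x) = sscal c (phi x)) \<and>
   (\<forall>x\<in>B1 \<times> B1. phi (tpar x) = spar (phi x))"
proof -
  have "B1 \<times> B1 \<subseteq> A \<times> A"
    using B1D by blast
  then show ?thesis
    by (auto simp: bij_betw_phi phi_tone phi_tadd phi_tscal phi_tpar phi_tbr intro!: phi_tmult)
qed

end

section \<open>The filtration by order and substitution into power series\<close>

definition monom_deg :: "nat \<Rightarrow> (nat \<Rightarrow> nat) \<Rightarrow> nat set \<Rightarrow> nat" where
  "monom_deg m \<alpha> S = (\<Sum>i<m. \<alpha> i) + card S"

lemma mhat_iff: "a \<in> mhat m n k \<longleftrightarrow> a \<in> Ahat m n \<and> (\<forall>\<alpha> S. monom_deg m \<alpha> S < k \<longrightarrow> a \<alpha> S = 0)"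
  unfolding mhat_def monom_deg_def by simp

lemma mhatD: "a \<in> mhat m n k \<Longrightarrow> monom_deg m \<alpha> S < k \<Longrightarrow> a \<alpha> S = 0"
  unfolding mhat_iff by blast

lemma mhat_Ahat: "a \<in> mhat m n k \<Longrightarrow> a \<in> Ahat m n"
  unfolding mhat_iff by blast

lemma mhat_0: "a \<in> Ahat m n \<Longrightarrow> a \<in> mhat m n 0"
  unfolding mhat_iff by simp

lemma mhat_1I:
  assumes "a \<in> Ahat m n" "a (\<lambda>_. 0) {} = 0"
  shows "a \<in> mhat m n 1"
  unfolding mhat_iff
proof (intro conjI allI impI assms(1))
  fix \<alpha> S assume deg: "monom_deg m \<alpha> S < 1"
  show "a \<alpha> S = 0"
  proof (cases "valid_idx m n \<alpha> S")
    case True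
    then have "S = {}" "\<alpha> = (\<lambda>_. 0)"
      using deg valid_idx_finite[OF True] unfolding monom_deg_def valid_idx_def
      by (auto simp: fun_eq_iff) (metis lessThan_iff not_le)
    then show ?thesis using assms(2) by simp
  qed (use assms(1) AhatD in blast)
qed

lemma monom_deg_split:
  assumes "\<beta> \<le> \<alpha>" "T \<subseteq> S" "finite S"
  shows "monom_deg m \<alpha> S = monom_deg m \<beta> T + monom_deg m (\<alpha> - \<beta>) (S - T)"
proof -
  have "(\<Sum>i<m. \<alpha> i) = (\<Sum>i<m. \<beta> i) + (\<Sum>i<m. \<alpha> i - \<beta> i)"
    using assms(1) by (simp add: le_fun_def sum.distrib[symmetric])
  then show ?thesis
    unfolding monom_deg_def using card_Diff_add[OF assms(2,3)] by simp
qed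

lemma mhat_smult:
  assumes a: "a \<in> mhat m n i" and b: "b \<in> mhat m n j"
  shows "smult a b \<in> mhat m n (i + j)"
  unfolding mhat_iff
proof (intro conjI allI impI)
  show ab: "smult a b \<in> Ahat m n" using a b mhat_Ahat by blast
  fix \<alpha> S assume deg: "monom_deg m \<alpha> S < i + j"
  show "smult a b \<alpha> S = 0"
  proof (cases "valid_idx m n \<alpha> S")
    case True
    show ?thesis
      unfolding smult_eq
    proof (intro sum.neutral ballI)
      fix \<beta> T assume "\<beta> \<in> {..\<alpha>}" "T \<in> Pow S"
      then have "monom_deg m \<beta> T < i \<or> monom_deg m (\<alpha> - \<beta>) (S - T) < j"
        using monom_deg_split[of \<beta> \<alpha> T S m] valid_idx_finite[OF True] deg by auto
      then show "shuffle_sign T (S - T) * a \<beta> T * b (\<alpha> - \<beta>) (S - T) = 0"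
        using mhatD[OF a] mhatD[OF b] by auto
    qed
  qed (use ab AhatD in blast)
qed

definition spower :: "ser \<Rightarrow> nat \<Rightarrow> ser" where
  "spower s k = (smult s ^^ k) sone"

lemma spower_0 [simp]: "spower s 0 = sone"
  unfolding spower_def by simp

lemma spower_Suc: "spower s (Suc k) = smult s (spower s k)"
  unfolding spower_def by simp

lemma spower_Ahat: "s \<in> Ahat m n \<Longrightarrow> spower s k \<in> Ahat m n"
  by (induction k) (auto simp: spower_Suc)

lemma spower_mhat: "s \<in> mhat m n 1 \<Longrightarrow> spower s k \<in> mhat m n k"
proof (induction k)
  case 0
  then show ?case by (simp add: mhat_0 sone_Ahat)
next
  case (Suc k)
  then show ?case using mhat_smult[of s m n 1 "spower s k" k] by (simp add: spower_Suc)
qed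

lemma spower_homog: "homog m n False s \<Longrightarrow> homog m n False (spower s k)"
  by (induction k) (auto simp: spower_Suc homog_sone dest: homog_smult)

lemma spower_add: "s \<in> Ahat m n \<Longrightarrow> spower s (i + j) = smult (spower s i) (spower s j)"
  by (induction i) (simp_all add: smult_sone_left[OF spower_Ahat] spower_Suc smult_assoc[OF _ spower_Ahat spower_Ahat])

text \<open>\<open>F(s)\<close> for \<open>s\<close> of positive order: the k-th power of \<open>s\<close> has order at least k, so truncating
  at the degree of the monomial loses nothing (see \<open>fps_subst_eq\<close>).\<close>

definition fps_subst :: "nat \<Rightarrow> complex fps \<Rightarrow> ser \<Rightarrow> ser" where
  "fps_subst m F s = (\<lambda>\<alpha> S. \<Sum>k\<le>monom_deg m \<alpha> S. fps_nth F k * spower s k \<alpha> S)"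

lemma fps_subst_eq:
  assumes s: "s \<in> mhat m n 1" and N: "monom_deg m \<alpha> S \<le> N"
  shows "fps_subst m F s \<alpha> S = (\<Sum>k\<le>N. fps_nth F k * spower s k \<alpha> S)"
  unfolding fps_subst_def
proof (rule sum.mono_neutral_left)
  show "\<forall>k\<in>{..N} - {..monom_deg m \<alpha> S}. fps_nth F k * spower s k \<alpha> S = 0"
    using mhatD[OF spower_mhat[OF s]] by auto
qed (use N in auto)

lemma fps_subst_Ahat: "s \<in> mhat m n 1 \<Longrightarrow> fps_subst m F s \<in> Ahat m n"
  unfolding Ahat_def fps_subst_def using AhatD[OF spower_Ahat[OF mhat_Ahat]] by (auto intro!: sum.neutral)

lemma fps_subst_homog: "s \<in> mhat m n 1 \<Longrightarrow> homog m n False s \<Longrightarrow> homog m n False (fps_subst m F s)"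
  unfolding homog_def[of m n False "fps_subst m F s"]
  using fps_subst_Ahat[of s m n F] homogD[OF spower_homog]
  by (auto simp: fps_subst_def intro!: sum.neutral)

lemma fps_subst_one: "fps_subst m 1 s = sone"
proof (intro ext)
  fix \<alpha> S
  have "fps_subst m 1 s \<alpha> S = (\<Sum>k\<le>monom_deg m \<alpha> S. if k = 0 then spower s k \<alpha> S else 0)"
    unfolding fps_subst_def by (rule sum.cong) (auto simp: fps_one_nth)
  then show "fps_subst m 1 s \<alpha> S = sone \<alpha> S" by simp
qed

lemma fps_subst_one_plus_X:
  assumes s: "s \<in> mhat m n 1"
  shows "fps_subst m (1 + fps_X) s = sadd sone s"
proof (intro ext)
  fix \<alpha> S
  have "fps_subst m (1 + fps_X) s \<alpha> S = (\<Sum>k\<le>Suc (monom_deg m \<alpha> S). fps_nth (1 + fps_X) k * spower s k \<alpha> S)"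
    by (rule fps_subst_eq[OF s]) simp
  also have "\<dots> = (\<Sum>k\<in>{0, 1}. fps_nth (1 + fps_X) k * spower s k \<alpha> S)"
    by (rule sum.mono_neutral_right) (auto simp: fps_X_nth)
  also have "\<dots> = sadd sone s \<alpha> S"
    using mhat_Ahat[OF s] by (simp add: fps_X_nth spower_Suc sadd_def smult_sone_right)
  finally show "fps_subst m (1 + fps_X) s \<alpha> S = sadd sone s \<alpha> S" .
qed

lemma fps_subst_mult:
  assumes s: "s \<in> mhat m n 1"
  shows "fps_subst m (F * G) s = smult (fps_subst m F s) (fps_subst m G s)"
proof (rule Ahat_eqI)
  have sA: "s \<in> Ahat m n" using s by (rule mhat_Ahat)
  show "fps_subst m (F * G) s \<in> Ahat m n" "smult (fps_subst m F s) (fps_subst m G s) \<in> Ahat m n"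
    using s by (auto intro!: fps_subst_Ahat)
  fix \<alpha> S assume v: "valid_idx m n \<alpha> S"
  have fS: "finite S" using v by (rule valid_idx_finite)
  define D where "D = monom_deg m \<alpha> S"
  define X where "X = (\<lambda>i j. fps_nth F i * fps_nth G j * spower s (i + j) \<alpha> S)"
  have le_D: "monom_deg m \<beta> T \<le> D" "monom_deg m (\<alpha> - \<beta>) (S - T) \<le> D" if "\<beta> \<le> \<alpha>" "T \<subseteq> S" for \<beta> T
    using monom_deg_split[OF that fS, of m] unfolding D_def by simp_all
  have "smult (fps_subst m F s) (fps_subst m G s) \<alpha> S = (\<Sum>\<beta>\<le>\<alpha>. \<Sum>T\<in>Pow S. shuffle_sign T (S - T) *
      (\<Sum>i\<le>D. fps_nth F i * spower s i \<beta> T) * (\<Sum>j\<le>D. fps_nth G j * spower s j (\<alpha> - \<beta>) (S - T)))"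
    unfolding smult_eq by (intro sum.cong refl) (simp add: fps_subst_eq[OF s le_D(1)] fps_subst_eq[OF s le_D(2)])
  also have "\<dots> = (\<Sum>\<beta>\<le>\<alpha>. \<Sum>T\<in>Pow S. \<Sum>i\<le>D. \<Sum>j\<le>D. fps_nth F i * fps_nth G j *
      (shuffle_sign T (S - T) * spower s i \<beta> T * spower s j (\<alpha> - \<beta>) (S - T)))"
    by (intro sum.cong refl) (simp add: sum_product sum_distrib_left mult_ac)
  also have "\<dots> = (\<Sum>i\<le>D. \<Sum>j\<le>D. \<Sum>\<beta>\<le>\<alpha>. \<Sum>T\<in>Pow S. fps_nth F i * fps_nth G j *
      (shuffle_sign T (S - T) * spower s i \<beta> T * spower s j (\<alpha> - \<beta>) (S - T)))"
    by (rule sum_swap_outer_pair)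
  also have "\<dots> = (\<Sum>i\<le>D. \<Sum>j\<le>D. fps_nth F i * fps_nth G j * smult (spower s i) (spower s j) \<alpha> S)"
    unfolding smult_eq by (simp only: sum_distrib_left)
  also have "\<dots> = (\<Sum>i\<le>D. \<Sum>j\<le>D. X i j)"
    unfolding X_def by (simp add: spower_add[OF sA])
  also have "\<dots> = (\<Sum>(i, j)\<in>{..D} \<times> {..D}. X i j)"
    by (rule sum.cartesian_product)
  also have "\<dots> = (\<Sum>(i, j)\<in>{(i, j). i + j \<le> D}. X i j)"
  proof (rule sum.mono_neutral_right)
    show "\<forall>x\<in>{..D} \<times> {..D} - {(i, j). i + j \<le> D}. (case x of (i, j) \<Rightarrow> X i j) = 0"
      using mhatD[OF spower_mhat[OF s]] unfolding X_def D_def by (auto, metis not_le)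
  qed auto
  also have "\<dots> = (\<Sum>k\<le>D. \<Sum>i\<le>k. X i (k - i))"
    by (rule sum.triangle_reindex_eq)
  also have "\<dots> = fps_subst m (F * G) s \<alpha> S"
    unfolding fps_subst_def D_def[symmetric] X_def fps_mult_nth
    by (intro sum.cong refl) (auto simp: sum_distrib_right atLeast0AtMost intro!: sum.cong)
  finally show "fps_subst m (F * G) s \<alpha> S = smult (fps_subst m F s) (fps_subst m G s) \<alpha> S" by simp
qed

lemma exists_inverse_sqrt:
  assumes s: "s \<in> mhat m n 1" and s_even: "homog m n False s"
  shows "\<exists>v. homog m n False v \<and> smult (smult v v) (sadd sone s) = sone"
proof -
  define V :: "complex fps" where "V = fps_binomial (-1/2)"
  have "V * V * (1 + fps_X) = 1"
    unfolding V_def fps_binomial_1[symmetric] fps_binomial_add_mult[symmetric] by simp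
  then have "fps_subst m (V * V * (1 + fps_X)) s = sone"
    by (simp add: fps_subst_one)
  then have "smult (smult (fps_subst m V s) (fps_subst m V s)) (sadd sone s) = sone"
    by (simp only: fps_subst_mult[OF s] fps_subst_one_plus_X[OF s])
  then show ?thesis using fps_subst_homog[OF s s_even] by blast
qed

section \<open>Normalising an odd element\<close>

lemma exists_quadratic_eq_one: "\<exists>l u :: complex. l * l * c + 2 * l * u + u * u * d = 1"
proof (cases "c = 0")
  case False
  then have "(1 / csqrt c) * (1 / csqrt c) * c + 2 * (1 / csqrt c) * 0 + 0 * 0 * d = 1"
    by (simp add: power2_eq_square[symmetric] power_divide)
  then show ?thesis by blast
next
  case c: True
  show ?thesis
  proof (cases "d = 0")
    case False
    then have "0 * 0 * c + 2 * 0 * (1 / csqrt d) + (1 / csqrt d) * (1 / csqrt d) * d = 1"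
      by (simp add: power2_eq_square[symmetric] power_divide)
    then show ?thesis by blast
  next
    case True
    have "csqrt 2 * csqrt 2 = 2"
      by (metis power2_csqrt power2_eq_square)
    then have "(1 / csqrt 2) * (1 / csqrt 2) * c + 2 * (1 / csqrt 2) * (1 / csqrt 2) + (1 / csqrt 2) * (1 / csqrt 2) * d = 1"
      using c True by (simp add: field_simps)
    then show ?thesis by blast
  qed
qed

context super_poisson
begin

lemma br_odd_br_self:
  assumes h: "homog m n True h"
  shows "br h (br h h) = szero"
proof (rule sscal_fixed_eq_szero)
  have "br (br h h) h = sneg (br h (br h h))"
    using br_antisym[OF br_homog[OF h h] h] by (simp add: ssign_def)
  then have "br h (br h h) = sadd (sneg (br h (br h h))) (sscal (-1) (br h (br h h)))"
    using br_jacobi[OF h h homog_Ahat[OF h]] by (simp add: ssign_def)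
  then show "sscal (-2) (br h (br h h)) = br h (br h h)"
    by (simp add: sneg_eq_sscal sadd_sscal_sscal)
qed simp

lemma br_inverse_sqrt_eq_szero:
  assumes h: "homog m n True h" and v: "homog m n False v" and w: "homog m n False w"
    and hw: "br h w = szero" and vvw: "smult (smult v v) w = sone"
  shows "br h v = szero"
proof -
  define u where "u = br h v"
  have u: "homog m n True u"
    unfolding u_def using br_homog[OF h v] by simp
  have A: "v \<in> A" "w \<in> A" "u \<in> A" using v w u by blast+
  have "br h (smult v v) = sadd (smult u v) (smult u v)"
    using br_leibniz[OF h v A(1)] smult_even_commute[OF v u] by (simp add: u_def ssign_def)
  moreover have "szero = smult (br h (smult v v)) w"
    using br_leibniz[OF h homog_smult[OF v v] A(2)] br_homog_sone[OF h] by (simp add: vvw hw)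
  ultimately have "szero = smult (sadd (smult u v) (smult u v)) w" by simp
  then have "szero = smult (smult (sadd (smult u v) (smult u v)) w) v" by simp
  also have "\<dots> = sadd u u"
  proof -
    have "smult (smult (smult u v) w) v = smult u (smult v (smult w v))"
      using A by (simp add: smult_assoc smult_Ahat)
    also have "\<dots> = u"
      using A vvw by (simp add: smult_even_commute[OF v w] smult_assoc[symmetric] smult_sone_right)
    finally show ?thesis
      by (simp add: smult_sadd_left)
  qed
  finally have "sscal 2 u = u"
    by (simp add: ser_defs)
  then show ?thesis
    unfolding u_def[symmetric] by (rule sscal_fixed_eq_szero) simp
qed

lemma br_smult_even_self:
  assumes h: "homog m n True h" and v: "homog m n False v" and hv: "br h v = szero"
  shows "br (smult h v) (smult h v) = smult (smult v v) (br h h)"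
proof -
  have A: "h \<in> A" "v \<in> A" "br h h \<in> A" using h v by blast+
  have hv_odd: "homog m n True (smult h v)"
    using homog_smult[OF h v] by simp
  have "br v v = szero"
    using br_antisym[OF v v] by (intro sscal_fixed_eq_szero[of "-1"]) (simp_all add: ssign_def sneg_eq_sscal)
  moreover have "br v h = szero"
    using br_antisym[OF v h] hv by (simp add: ssign_def)
  ultimately have "br v (smult h v) = szero"
    using br_leibniz[OF v h A(2)] by simp
  then have "br (smult h v) v = szero"
    using br_antisym[OF hv_odd v] by simp
  moreover have "br h (smult h v) = smult (br h h) v"
    using br_leibniz[OF h h A(2)] hv by simp
  then have "br (smult h v) h = smult (br h h) v"
    using br_antisym[OF hv_odd h] by (simp add: ssign_def sneg_eq_sscal)
  ultimately have "br (smult h v) (smult h v) = smult (smult (br h h) v) v"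
    using br_leibniz[OF hv_odd h A(2)] by simp
  also have "\<dots> = smult (smult v v) (br h h)"
  proof -
    have "homog m n False (smult v v)" "homog m n False (br h h)"
      using homog_smult[OF v v] br_homog[OF h h] by simp_all
    then show ?thesis
      using A by (simp add: smult_assoc smult_even_commute)
  qed
  finally show ?thesis .
qed

lemma exists_odd_br_self_eq_sone:
  assumes h0: "homog m n True h0" and s: "s \<in> mhat m n 1" and h0h0: "br h0 h0 = sadd sone s"
  shows "\<exists>h. homog m n True h \<and> br h h = sone"
proof -
  have w: "homog m n False (br h0 h0)"
    using br_homog[OF h0 h0] by simp
  have "s = sadd (br h0 h0) (sneg sone)"
    unfolding h0h0 by (simp add: ser_defs)
  then have "homog m n False s"
    using w by (simp add: homog_sadd homog_sneg homog_sone)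
  then obtain v where v: "homog m n False v" and vvw: "smult (smult v v) (br h0 h0) = sone"
    using exists_inverse_sqrt[OF s] h0h0 by auto
  have "br h0 v = szero"
    using br_inverse_sqrt_eq_szero[OF h0 v w br_odd_br_self[OF h0] vvw] .
  then have "br (smult h0 v) (smult h0 v) = sone"
    using br_smult_even_self[OF h0 v] vvw by simp
  moreover have "homog m n True (smult h0 v)"
    using homog_smult[OF h0 v] by simp
  ultimately show ?thesis by blast
qed

lemma exists_odd_br_self_eq_sone_plus_mhat:
  assumes f: "homog m n True f" and g: "homog m n True g"
    and t: "t \<in> mhat m n 1" and fg: "br f g = sadd sone t"
  shows "\<exists>h0 s. homog m n True h0 \<and> s \<in> mhat m n 1 \<and> br h0 h0 = sadd sone s"
proof -
  let ?const = "\<lambda>a :: ser. a (\<lambda>_. 0) {}"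
  obtain l u :: complex where quad: "l * l * ?const (br f f) + 2 * l * u + u * u * ?const (br g g) = 1"
    using exists_quadratic_eq_one by blast
  define h0 where "h0 = sadd (sscal l f) (sscal u g)"
  have h0: "homog m n True h0"
    unfolding h0_def by (intro homog_sadd homog_sscal f g)
  have A: "f \<in> A" "g \<in> A" using f g by blast+
  have gf: "br g f = br f g"
    using br_antisym[OF g f] by (simp add: ssign_def sneg_eq_sscal)
  have "br h0 h0 = sadd (sadd (sscal (l * l) (br f f)) (sscal (l * u) (br f g)))
      (sadd (sscal (u * l) (br g f)) (sscal (u * u) (br g g)))"
    unfolding h0_def using A
    by (simp add: br_sadd_left br_sadd_right br_sscal_left br_sscal_right sscal_Ahat sadd_Ahat)
       (simp add: ser_defs algebra_simps)
  moreover have "?const t = 0"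
    using mhatD[OF t] by (simp add: monom_deg_def)
  ultimately have "?const (br h0 h0) = 1"
    using quad unfolding gf fg by (simp add: ser_defs sone_def algebra_simps)
  moreover have "br h0 h0 \<in> A"
    using h0 by blast
  ultimately have "sadd (br h0 h0) (sneg sone) \<in> mhat m n 1"
    by (intro mhat_1I sadd_Ahat sneg_Ahat sone_Ahat) (simp_all add: ser_defs sone_def)
  moreover have "br h0 h0 = sadd sone (sadd (br h0 h0) (sneg sone))"
    by (simp add: ser_defs)
  ultimately show ?thesis
    using h0 by blast
qed

end

theorem lemma2p2:
  fixes m n :: nat and br :: "ser \<Rightarrow> ser \<Rightarrow> ser"
  assumes "poisson_bracket m n br"
  shows "(\<forall>f g t. homog m n True f \<and> f \<in> mhat m n 1 \<and> homog m n True g \<and> g \<in> mhat m n 1 \<and>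
            t \<in> mhat m n 1 \<and> br f g = sadd sone t
            \<longrightarrow> (\<exists>h. homog m n True h \<and> br h h = sone))
       \<and> (\<forall>h. homog m n True h \<and> br h h = sone \<longrightarrow>
            (let B1 = {b \<in> Ahat m n. br h b = szero};
                 \<phi> = (\<lambda>x. sadd (fst x) (smult h (snd x)))
             in bij_betw \<phi> (B1 \<times> B1) (Ahat m n) \<and>
                \<phi> tone = sone \<and>
                (\<forall>x\<in>B1 \<times> B1. \<forall>y\<in>B1 \<times> B1.
                   \<phi> (tadd x y) = sadd (\<phi> x) (\<phi> y) \<and>
                   \<phi> (tmult x y) = smult (\<phi> x) (\<phi> y) \<and>
                   \<phi> (tbr br x y) = br (\<phi> x) (\<phi> y)) \<and>
                (\<forall>c. \<forall>x\<in>B1 \<times> B1. \<phi> (tscal c x) = sscal c (\<phi> x)) \<and>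
                (\<forall>x\<in>B1 \<times> B1. \<phi> (tpar x) = spar (\<phi> x))))"
proof -
  interpret super_poisson m n br
    using assms by (rule super_poisson.intro)
  show ?thesis
    apply (intro conjI allI impI)
    subgoal for f g t
      using exists_odd_br_self_eq_sone_plus_mhat[of f g t] exists_odd_br_self_eq_sone by blast
    subgoal premises unit for h
    proof -
      interpret odd_unit m n br h
        using unit by unfold_locales auto
      show ?thesis
        unfolding Let_def B1_def[symmetric] phi_def[symmetric, abs_def] by (rule phi_poisson_isomorphism)
    qed
    done
qed

end
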